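(* Let $E$ be an order complete vector lattice and let $T:E\to S(X)$ be Wickstead's representation of $E$, namely: $(B_\alpha)_{\alpha}$ is a family of pairwise disjoint bands of $E$, each with a weak unit $x_\alpha$, such that every $x\in E$ is written as $x=\bigvee_\alpha y_\alpha$ with $y_\alpha\in B_\alpha$; $X_\alpha$ are compact Hausdorff spaces and $T_\alpha:B_\alpha\to S(X_\alpha)$ injective lattice homomorphisms with $T_\alpha(x_\alpha)=\mathbf{1}_{X_\alpha}$ and the supremum-norm closure of $T_\alpha$ of the ideal generated by $x_\alpha$ in $B_\alpha$ equal to $C(X_\alpha)$; $X=\bigsqcup_\alpha X_\alpha$; and $T(x)=(T_\alpha(y_\alpha))_\alpha$ under the identification $S(X)=\prod_\alpha S(X_\alpha)$. Then $T(E)$ is an ideal of $S(X)$ (so $E$ can be considered as an ideal of $S(X)$).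
   Context: For a topological space $X$, $S(X)$ is the Archimedean vector lattice of equivalence classes of continuous real-valued functions defined on open dense subsets of $X$ (two functions identified if they agree on the intersection of their domains), with pointwise operations; $\mathbf{1}_X$ is the constant function $1$. For a disjoint union $X=\bigsqcup_\alpha X_\alpha$, $S(X)$ is identified with $\prod_\alpha S(X_\alpha)$ with the componentwise order. *)

theory Defs
  imports "HOL-Analysis.Analysis"
begin

definition vl_abs :: "'a::{lattice,ab_group_add} \<Rightarrow> 'a" where
  "vl_abs x = sup x (- x)"

definition is_sup :: "'a::order set \<Rightarrow> 'a \<Rightarrow> bool" where
  "is_sup A s \<longleftrightarrow> (\<forall>a\<in>A. a \<le> s) \<and> (\<forall>u. (\<forall>a\<in>A. a \<le> u) \<longrightarrow> s \<le> u)"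

definition order_complete :: "'a::order itself \<Rightarrow> bool" where
  "order_complete _ \<longleftrightarrow> (\<forall>A::'a set. A \<noteq> {} \<longrightarrow> bdd_above A \<longrightarrow> (\<exists>s. is_sup A s))"

definition vl_disjoint :: "'a::{lattice,ab_group_add} \<Rightarrow> 'a \<Rightarrow> bool" where
  "vl_disjoint x y \<longleftrightarrow> inf (vl_abs x) (vl_abs y) = 0"

definition vl_ideal :: "'a::{ordered_real_vector,lattice} set \<Rightarrow> bool" where
  "vl_ideal B \<longleftrightarrow> 0 \<in> B \<and> (\<forall>x\<in>B. \<forall>y\<in>B. x + y \<in> B) \<and> (\<forall>c. \<forall>x\<in>B. c *\<^sub>R x \<in> B)
     \<and> (\<forall>x y. y \<in> B \<longrightarrow> vl_abs x \<le> vl_abs y \<longrightarrow> x \<in> B)"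

definition vl_band :: "'a::{ordered_real_vector,lattice} set \<Rightarrow> bool" where
  "vl_band B \<longleftrightarrow> vl_ideal B \<and> (\<forall>A s. A \<subseteq> B \<longrightarrow> is_sup A s \<longrightarrow> s \<in> B)"

definition weak_unit :: "'a::{ordered_real_vector,lattice} set \<Rightarrow> 'a \<Rightarrow> bool" where
  "weak_unit B u \<longleftrightarrow> u \<in> B \<and> 0 \<le> u \<and> (\<forall>z\<in>B. inf (vl_abs z) u = 0 \<longrightarrow> z = 0)"

definition generated_ideal :: "'a::{ordered_real_vector,lattice} set \<Rightarrow> 'a \<Rightarrow> 'a set" where
  "generated_ideal B u = {z \<in> B. \<exists>c. vl_abs z \<le> c *\<^sub>R vl_abs u}"

text \<open>An element of S(X) is represented by a pair (U, f): U open dense, f continuous on U.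
  Two representatives denote the same element iff they agree on the intersection of domains.\<close>

type_synonym 'x sfun = "'x set \<times> ('x \<Rightarrow> real)"

definition S_elem :: "'x topology \<Rightarrow> 'x sfun \<Rightarrow> bool" where
  "S_elem X a \<longleftrightarrow> openin X (fst a) \<and> X closure_of (fst a) = topspace X
     \<and> continuous_map (subtopology X (fst a)) euclideanreal (snd a)"

definition S_eq :: "'x sfun \<Rightarrow> 'x sfun \<Rightarrow> bool" where
  "S_eq a b \<longleftrightarrow> (\<forall>p \<in> fst a \<inter> fst b. snd a p = snd b p)"

definition S_le :: "'x sfun \<Rightarrow> 'x sfun \<Rightarrow> bool" where
  "S_le a b \<longleftrightarrow> (\<forall>p \<in> fst a \<inter> fst b. snd a p \<le> snd b p)"

definition S_add :: "'x sfun \<Rightarrow> 'x sfun \<Rightarrow> 'x sfun" where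
  "S_add a b = (fst a \<inter> fst b, \<lambda>p. snd a p + snd b p)"

definition S_scale :: "real \<Rightarrow> 'x sfun \<Rightarrow> 'x sfun" where
  "S_scale c a = (fst a, \<lambda>p. c * snd a p)"

definition S_sup :: "'x sfun \<Rightarrow> 'x sfun \<Rightarrow> 'x sfun" where
  "S_sup a b = (fst a \<inter> fst b, \<lambda>p. max (snd a p) (snd b p))"

definition S_abs :: "'x sfun \<Rightarrow> 'x sfun" where
  "S_abs a = (fst a, \<lambda>p. \<bar>snd a p\<bar>)"

definition S_one :: "'x topology \<Rightarrow> 'x sfun" where
  "S_one X = (topspace X, \<lambda>_. 1)"

definition S_inj_lattice_hom ::
  "'x topology \<Rightarrow> 'a::{ordered_real_vector,lattice} set \<Rightarrow> ('a \<Rightarrow> 'x sfun) \<Rightarrow> bool" where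
  "S_inj_lattice_hom X B T \<longleftrightarrow>
     (\<forall>x\<in>B. S_elem X (T x))
   \<and> (\<forall>x\<in>B. \<forall>y\<in>B. S_eq (T (x + y)) (S_add (T x) (T y)))
   \<and> (\<forall>c. \<forall>x\<in>B. S_eq (T (c *\<^sub>R x)) (S_scale c (T x)))
   \<and> (\<forall>x\<in>B. \<forall>y\<in>B. S_eq (T (sup x y)) (S_sup (T x) (T y)))
   \<and> (\<forall>x\<in>B. \<forall>y\<in>B. S_eq (T x) (T y) \<longrightarrow> x = y)"

definition sup_closure_is_C :: "'x topology \<Rightarrow> ('a \<Rightarrow> 'x sfun) \<Rightarrow> 'a set \<Rightarrow> bool" where
  "sup_closure_is_C X T I \<longleftrightarrow>
     (\<forall>z\<in>I. \<exists>g. continuous_map X euclideanreal g \<and> S_eq (T z) (topspace X, g))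
   \<and> (\<forall>g. continuous_map X euclideanreal g \<longrightarrow>
        (\<forall>\<epsilon>>0. \<exists>z\<in>I. \<exists>h. continuous_map X euclideanreal h \<and> S_eq (T z) (topspace X, h)
             \<and> (\<forall>p\<in>topspace X. \<bar>g p - h p\<bar> < \<epsilon>)))"

section \<open>S(X) for X the disjoint union of X_\<alpha>, \<alpha> \<in> I, identified with the product\<close>

definition Sp_elem :: "('i \<Rightarrow> 'x topology) \<Rightarrow> 'i set \<Rightarrow> ('i \<Rightarrow> 'x sfun) \<Rightarrow> bool" where
  "Sp_elem X I F \<longleftrightarrow> (\<forall>\<alpha>\<in>I. S_elem (X \<alpha>) (F \<alpha>))"

definition Sp_eq :: "'i set \<Rightarrow> ('i \<Rightarrow> 'x sfun) \<Rightarrow> ('i \<Rightarrow> 'x sfun) \<Rightarrow> bool" where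
  "Sp_eq I F G \<longleftrightarrow> (\<forall>\<alpha>\<in>I. S_eq (F \<alpha>) (G \<alpha>))"

definition Sp_le :: "'i set \<Rightarrow> ('i \<Rightarrow> 'x sfun) \<Rightarrow> ('i \<Rightarrow> 'x sfun) \<Rightarrow> bool" where
  "Sp_le I F G \<longleftrightarrow> (\<forall>\<alpha>\<in>I. S_le (F \<alpha>) (G \<alpha>))"

definition Sp_add :: "('i \<Rightarrow> 'x sfun) \<Rightarrow> ('i \<Rightarrow> 'x sfun) \<Rightarrow> ('i \<Rightarrow> 'x sfun)" where
  "Sp_add F G = (\<lambda>\<alpha>. S_add (F \<alpha>) (G \<alpha>))"

definition Sp_scale :: "real \<Rightarrow> ('i \<Rightarrow> 'x sfun) \<Rightarrow> ('i \<Rightarrow> 'x sfun)" where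
  "Sp_scale c F = (\<lambda>\<alpha>. S_scale c (F \<alpha>))"

definition Sp_abs :: "('i \<Rightarrow> 'x sfun) \<Rightarrow> ('i \<Rightarrow> 'x sfun)" where
  "Sp_abs F = (\<lambda>\<alpha>. S_abs (F \<alpha>))"

definition Sp_ideal :: "('i \<Rightarrow> 'x topology) \<Rightarrow> 'i set \<Rightarrow> ('i \<Rightarrow> 'x sfun) set \<Rightarrow> bool" where
  "Sp_ideal X I J \<longleftrightarrow>
     (\<forall>F\<in>J. Sp_elem X I F) \<and> J \<noteq> {}
   \<and> (\<forall>F\<in>J. \<forall>G\<in>J. \<exists>H\<in>J. Sp_eq I H (Sp_add F G))
   \<and> (\<forall>c. \<forall>F\<in>J. \<exists>H\<in>J. Sp_eq I H (Sp_scale c F))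
   \<and> (\<forall>F\<in>J. \<forall>G. Sp_elem X I G \<longrightarrow> Sp_le I (Sp_abs G) (Sp_abs F) \<longrightarrow> (\<exists>H\<in>J. Sp_eq I H G))"

end

theory Submission
  imports Defs "HOL-Library.Lattice_Algebras"
begin

text \<open>
  Fix a band \<open>B\<^sub>\<alpha>\<close> with weak unit \<open>u\<^sub>\<alpha>\<close>. For \<open>0 \<le> z \<in> B\<^sub>\<alpha>\<close> and \<open>g \<in> S(X\<^sub>\<alpha>)\<close> with
  \<open>0 \<le> g \<le> T\<^sub>\<alpha> z\<close>, the supremum \<open>w\<close> of all \<open>v \<in> [0, z]\<close> with \<open>T\<^sub>\<alpha> v \<le> g\<close> exists by order
  completeness, and \<open>T\<^sub>\<alpha> w = g\<close>: if the two differed near some point, an Urysohn bump on the compact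
  Hausdorff space \<open>X\<^sub>\<alpha>\<close>, approximated uniformly by images of the ideal generated by \<open>u\<^sub>\<alpha>\<close>, would
  produce either a member of that set exceeding \<open>w\<close> or an upper bound of it strictly below \<open>w\<close>.

  The components \<open>y x \<alpha>\<close> are the band projections of \<open>x\<close>: they are linear, positive and bounded by
  \<open>\<bar>x\<bar>\<close>, and a bounded family of positive \<open>w\<^sub>\<alpha> \<in> B\<^sub>\<alpha>\<close> is the family of components of its supremum.
  So if \<open>\<bar>G\<bar> \<le> \<bar>T x\<bar>\<close>, the positive and negative parts of each \<open>G\<^sub>\<alpha>\<close> have preimages in \<open>B\<^sub>\<alpha>\<close> below
  \<open>\<bar>x\<bar>\<close>, and gluing them over all bands gives \<open>s\<close> with \<open>T s = G\<close>.
\<close>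

section \<open>Vector lattice arithmetic\<close>

interpretation vl: lattice_ab_group_add_abs vl_abs "(+)" "0 :: 'e::{ordered_real_vector,lattice}"
    "(-)" uminus "(\<le>)" "(<)" inf sup
  by unfold_locales (simp add: vl_abs_def)

lemma scaleR_sup_nonneg:
  fixes a b :: "'e::{ordered_real_vector,lattice}"
  assumes "0 \<le> k"
  shows "k *\<^sub>R sup a b = sup (k *\<^sub>R a) (k *\<^sub>R b)"
proof (cases "k = 0")
  case False
  with assms have k: "0 < k" by simp
  have "a \<le> (1/k) *\<^sub>R sup (k *\<^sub>R a) (k *\<^sub>R b)" "b \<le> (1/k) *\<^sub>R sup (k *\<^sub>R a) (k *\<^sub>R b)"
    using k scaleR_left_mono[OF sup_ge1, of "1/k" "k *\<^sub>R a" "k *\<^sub>R b"]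
      scaleR_left_mono[OF sup_ge2, of "1/k" "k *\<^sub>R b" "k *\<^sub>R a"] by simp_all
  then have "k *\<^sub>R sup a b \<le> k *\<^sub>R ((1/k) *\<^sub>R sup (k *\<^sub>R a) (k *\<^sub>R b))"
    using k by (intro scaleR_left_mono) simp_all
  then have "k *\<^sub>R sup a b \<le> sup (k *\<^sub>R a) (k *\<^sub>R b)"
    using k by simp
  with assms show ?thesis
    by (simp add: antisym scaleR_left_mono)
qed simp

lemma scaleR_inf_nonneg:
  fixes a b :: "'e::{ordered_real_vector,lattice}"
  assumes "0 \<le> k"
  shows "k *\<^sub>R inf a b = inf (k *\<^sub>R a) (k *\<^sub>R b)"
proof -
  have "k *\<^sub>R inf a b = - (k *\<^sub>R sup (- a) (- b))"
    by (simp only: scaleR_minus_right[symmetric] vl.neg_sup_eq_inf minus_minus)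
  also have "\<dots> = inf (k *\<^sub>R a) (k *\<^sub>R b)"
    by (simp only: scaleR_sup_nonneg[OF assms] scaleR_minus_right vl.neg_sup_eq_inf minus_minus)
  finally show ?thesis .
qed

lemma vl_abs_scaleR:
  fixes a :: "'e::{ordered_real_vector,lattice}"
  shows "vl_abs (k *\<^sub>R a) = \<bar>k\<bar> *\<^sub>R vl_abs a"
proof -
  have nonneg: "vl_abs (c *\<^sub>R a) = c *\<^sub>R vl_abs a" if "0 \<le> c" for c
    using that by (simp add: vl_abs_def scaleR_sup_nonneg)
  show ?thesis
  proof (cases "0 \<le> k")
    case False
    have "vl_abs (k *\<^sub>R a) = vl_abs ((- k) *\<^sub>R a)"
      by (simp only: scaleR_minus_left vl.abs_minus_cancel)
    with False show ?thesis
      using nonneg[of "- k"] by simp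
  qed (simp add: nonneg)
qed

lemma inf_add_le_add_inf:
  fixes a b c :: "'e::{ordered_real_vector,lattice}"
  assumes "0 \<le> a" "0 \<le> b" "0 \<le> c"
  shows "inf (a + b) c \<le> inf a c + inf b c"
proof -
  have "inf a c + inf b c = inf (inf a c + b) (inf a c + c)"
    by (rule vl.add_inf_distrib_left)
  also have "inf a c + b = inf (a + b) (c + b)"
    by (rule vl.add_inf_distrib_right)
  also have "inf a c + c = inf (a + c) (c + c)"
    by (rule vl.add_inf_distrib_right)
  finally have "inf a c + inf b c = inf (inf (a + b) (c + b)) (inf (a + c) (c + c))" .
  moreover have "c \<le> c + b" "c \<le> a + c" "c \<le> c + c"
    using assms by (simp_all add: add_increasing add_increasing2)
  ultimately show ?thesis
    by (simp add: le_infI2)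
qed

lemma is_sup_inf_le:
  fixes s c v :: "'e::{ordered_real_vector,lattice}"
  assumes s: "is_sup P s" and le: "\<And>p. p \<in> P \<Longrightarrow> inf p c \<le> v"
  shows "inf s c \<le> v"
proof -
  have "p \<le> v + sup s c - c" if p: "p \<in> P" for p
  proof -
    have "p + c = sup p c + inf p c" by (rule vl.add_eq_inf_sup)
    also have "\<dots> \<le> sup s c + v"
      using le[OF p] s p unfolding is_sup_def by (intro add_mono) (auto intro: le_supI1)
    finally show ?thesis by (simp add: le_diff_eq add.commute)
  qed
  then have "s \<le> v + sup s c - c"
    using s unfolding is_sup_def by blast
  then have "s + c \<le> v + sup s c"
    by (simp add: le_diff_eq)
  then have "sup s c + inf s c \<le> sup s c + v"
    unfolding vl.add_eq_inf_sup[of s c] by (simp add: add.commute)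
  then show ?thesis
    by simp
qed

lemma vl_disjoint_nonneg_iff:
  fixes a c :: "'e::{ordered_real_vector,lattice}"
  assumes "0 \<le> a" "0 \<le> c"
  shows "vl_disjoint a c \<longleftrightarrow> inf a c = 0"
  using assms by (simp add: vl_disjoint_def)

lemma vl_disjoint_add:
  fixes a b c :: "'e::{ordered_real_vector,lattice}"
  assumes "vl_disjoint a c" "vl_disjoint b c"
  shows "vl_disjoint (a + b) c"
proof -
  have "inf (vl_abs (a + b)) (vl_abs c) \<le> inf (vl_abs a + vl_abs b) (vl_abs c)"
    using vl.abs_triangle_ineq by (rule inf_mono) simp
  also have "\<dots> \<le> inf (vl_abs a) (vl_abs c) + inf (vl_abs b) (vl_abs c)"
    by (rule inf_add_le_add_inf) simp_all
  finally show ?thesis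
    using assms unfolding vl_disjoint_def by (simp add: antisym)
qed

lemma vl_disjoint_scaleR:
  fixes a c :: "'e::{ordered_real_vector,lattice}"
  assumes "vl_disjoint a c"
  shows "vl_disjoint (k *\<^sub>R a) c"
proof -
  let ?A = "vl_abs a" and ?C = "vl_abs c" and ?m = "\<bar>k\<bar>"
  have "inf (?m *\<^sub>R ?A) ?C \<le> 0"
  proof (cases "?m \<le> 1")
    case True
    then have "?m *\<^sub>R ?A \<le> ?A"
      using scaleR_right_mono[of ?m 1 ?A] by simp
    then show ?thesis
      using assms unfolding vl_disjoint_def by (metis inf_mono order_refl)
  next
    case False
    then have "?C \<le> ?m *\<^sub>R ?C"
      using scaleR_right_mono[of 1 ?m ?C] by simp
    then have "inf (?m *\<^sub>R ?A) ?C \<le> ?m *\<^sub>R inf ?A ?C"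
      by (simp add: scaleR_inf_nonneg le_infI2)
    then show ?thesis
      using assms unfolding vl_disjoint_def by simp
  qed
  then show ?thesis
    unfolding vl_disjoint_def vl_abs_scaleR by (auto intro!: antisym le_infI scaleR_nonneg_nonneg)
qed

lemma vl_disjoint_diff:
  fixes a b c :: "'e::{ordered_real_vector,lattice}"
  assumes "vl_disjoint a c" "vl_disjoint b c"
  shows "vl_disjoint (a - b) c"
  using vl_disjoint_add[OF assms(1) vl_disjoint_scaleR[OF assms(2), of "-1"]] by simp

section \<open>Continuous functions on dense open sets\<close>

lemma openin_Collect_less:
  assumes U: "openin X U"
    and f: "continuous_map (subtopology X U) euclideanreal f"
    and g: "continuous_map (subtopology X U) euclideanreal g"
  shows "openin X {q \<in> U. f q < g q}"
proof -
  have "continuous_map (subtopology X U) euclideanreal (\<lambda>r. g r - f r)"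
    using g f by (rule continuous_map_diff)
  then have "openin (subtopology X U) {r \<in> topspace (subtopology X U). g r - f r \<in> {0<..}}"
    by (rule openin_continuous_map_preimage) simp
  then show ?thesis
    using U openin_subset[OF U] openin_trans_full by (force simp: Int_absorb1)
qed

lemma continuous_map_le_on_dense:
  assumes U: "openin X U"
    and f: "continuous_map (subtopology X U) euclideanreal f"
    and g: "continuous_map (subtopology X U) euclideanreal g"
    and E: "X closure_of E = topspace X"
    and le: "\<And>q. q \<in> U \<Longrightarrow> q \<in> E \<Longrightarrow> f q \<le> g q"
    and q: "q \<in> U"
  shows "f q \<le> g q"
proof (rule ccontr)
  assume "\<not> f q \<le> g q"
  then have "{r \<in> U. g r < f r} \<noteq> {}"
    using q by auto
  then obtain r where "r \<in> U" "r \<in> E" "g r < f r"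
    using openin_Collect_less[OF U g f] E dense_intersects_open by blast
  with le show False by force
qed

lemma dense_open_Int:
  assumes "openin X A" "X closure_of A = topspace X" "X closure_of B = topspace X"
  shows "X closure_of (A \<inter> B) = topspace X"
  using assms openin_subset[OF assms(1)] closure_of_openin_Int_superset[of X A B] by simp

lemma compact_Hausdorff_bump:
  assumes "compact_space X" "Hausdorff_space X" "openin X N" "p \<in> N"
  obtains \<phi> where "continuous_map X euclideanreal \<phi>" "\<phi> p = 1"
    "\<And>q. q \<in> topspace X \<Longrightarrow> 0 \<le> \<phi> q \<and> \<phi> q \<le> 1"
    "\<And>q. q \<in> topspace X \<Longrightarrow> q \<notin> N \<Longrightarrow> \<phi> q = 0"
proof -
  have "completely_regular_space X"
    using assms normal_imp_completely_regular_space compact_Hausdorff_or_regular_imp_normal_space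
    by blast
  moreover have "closedin X (topspace X - N)" "p \<in> topspace X - (topspace X - N)"
    using assms openin_subset by fastforce+
  ultimately obtain f where f: "continuous_map X (top_of_set {0..1::real}) f"
    "f p = 0" "f ` (topspace X - N) \<subseteq> {1}"
    unfolding completely_regular_space_def by metis
  have "continuous_map X euclideanreal (\<lambda>q. 1 - f q)"
    using f(1) continuous_map_into_fulltopology by (intro continuous_map_diff) auto
  moreover have "f q \<in> {0..1}" if "q \<in> topspace X" for q
    using f(1) that continuous_map_image_subset_topspace by fastforce
  ultimately show ?thesis
    using f by (intro that[of "\<lambda>q. 1 - f q"]) auto
qed

lemma S_le_on_dense:
  assumes a: "S_elem X a" and b: "S_elem X b" and E: "X closure_of E = topspace X"
    and le: "\<And>q. q \<in> fst a \<Longrightarrow> q \<in> fst b \<Longrightarrow> q \<in> E \<Longrightarrow> snd a q \<le> snd b q"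
  shows "S_le a b"
  unfolding S_le_def
proof
  fix q assume "q \<in> fst a \<inter> fst b"
  moreover have "openin X (fst a \<inter> fst b)"
    using a b unfolding S_elem_def by blast
  moreover have "continuous_map (subtopology X (fst a \<inter> fst b)) euclideanreal (snd a)"
    "continuous_map (subtopology X (fst a \<inter> fst b)) euclideanreal (snd b)"
    using a b unfolding S_elem_def by (auto intro: continuous_map_from_subtopology_mono)
  ultimately show "snd a q \<le> snd b q"
    using continuous_map_le_on_dense[OF _ _ _ E] le by blast
qed

lemma S_eq_on_dense:
  assumes a: "S_elem X a" and b: "S_elem X b" and E: "X closure_of E = topspace X"
    and eq: "\<And>q. q \<in> fst a \<Longrightarrow> q \<in> fst b \<Longrightarrow> q \<in> E \<Longrightarrow> snd a q = snd b q"
  shows "S_eq a b"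
  using S_le_on_dense[OF a b E] S_le_on_dense[OF b a E] eq
  unfolding S_eq_def S_le_def by (force intro: antisym)

section \<open>A single band\<close>

locale band_rep =
  fixes X :: "'x topology" and B :: "'e::{ordered_real_vector,lattice} set"
    and u :: 'e and T :: "'e \<Rightarrow> 'x sfun"
  assumes complete: "order_complete TYPE('e)"
    and band: "vl_band B"
    and unit: "weak_unit B u"
    and compact: "compact_space X" and Hausdorff: "Hausdorff_space X"
    and hom: "S_inj_lattice_hom X B T"
    and T_unit: "S_eq (T u) (S_one X)"
    and dense_image: "sup_closure_is_C X T (generated_ideal B u)"
begin

abbreviation D :: "'e \<Rightarrow> 'x set" where "D a \<equiv> fst (T a)"
abbreviation V :: "'e \<Rightarrow> 'x \<Rightarrow> real" where "V a \<equiv> snd (T a)"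

lemma
  shows zero_in_B: "0 \<in> B"
    and add_in_B: "a \<in> B \<Longrightarrow> b \<in> B \<Longrightarrow> a + b \<in> B"
    and scaleR_in_B: "a \<in> B \<Longrightarrow> c *\<^sub>R a \<in> B"
    and solid_B: "b \<in> B \<Longrightarrow> vl_abs a \<le> vl_abs b \<Longrightarrow> a \<in> B"
  using band unfolding vl_band_def vl_ideal_def by blast+

lemma minus_in_B: "a \<in> B \<Longrightarrow> - a \<in> B"
  using scaleR_in_B[of a "-1"] by simp

lemma diff_in_B: "a \<in> B \<Longrightarrow> b \<in> B \<Longrightarrow> a - b \<in> B"
  using add_in_B[OF _ minus_in_B, of a b] by simp

lemma pprt_in_B: "a \<in> B \<Longrightarrow> sup a 0 \<in> B"
  by (erule solid_B) (use vl.abs_ge_self[of a] vl.abs_ge_zero[of a] in \<open>simp add: vl.abs_of_nonneg\<close>)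

lemma sup_in_B: "a \<in> B \<Longrightarrow> b \<in> B \<Longrightarrow> sup a b \<in> B"
  using add_in_B[OF _ pprt_in_B[OF diff_in_B], of a b a]
  by (simp add: vl.add_sup_distrib_left sup_commute)

lemma inf_in_B: "a \<in> B \<Longrightarrow> b \<in> B \<Longrightarrow> inf a b \<in> B"
  unfolding vl.inf_eq_neg_sup[of a b] by (intro minus_in_B sup_in_B)

lemma abs_in_B: "a \<in> B \<Longrightarrow> vl_abs a \<in> B"
  unfolding vl_abs_def by (intro sup_in_B minus_in_B)

lemma unit_in_B: "u \<in> B" and unit_nonneg: "0 \<le> u"
  using unit unfolding weak_unit_def by blast+

lemma T_elem: "a \<in> B \<Longrightarrow> S_elem X (T a)"
  using hom unfolding S_inj_lattice_hom_def by simp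

lemma
  assumes "a \<in> B"
  shows openin_D: "openin X (D a)" and dense_D: "X closure_of (D a) = topspace X"
    and D_subset: "D a \<subseteq> topspace X"
  using T_elem[OF assms] openin_subset[of X "D a"] unfolding S_elem_def by simp_all

lemma continuous_V:
  "a \<in> B \<Longrightarrow> U \<subseteq> D a \<Longrightarrow> continuous_map (subtopology X U) euclideanreal (V a)"
  using T_elem continuous_map_from_subtopology_mono unfolding S_elem_def by blast

lemma V_add:
  "a \<in> B \<Longrightarrow> b \<in> B \<Longrightarrow> p \<in> D (a + b) \<Longrightarrow> p \<in> D a \<Longrightarrow> p \<in> D b \<Longrightarrow> V (a + b) p = V a p + V b p"
  using hom unfolding S_inj_lattice_hom_def S_eq_def S_add_def by simp

lemma V_scaleR:
  "a \<in> B \<Longrightarrow> p \<in> D (c *\<^sub>R a) \<Longrightarrow> p \<in> D a \<Longrightarrow> V (c *\<^sub>R a) p = c * V a p"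
  using hom unfolding S_inj_lattice_hom_def S_eq_def S_scale_def by simp

lemma V_sup:
  "a \<in> B \<Longrightarrow> b \<in> B \<Longrightarrow> p \<in> D (sup a b) \<Longrightarrow> p \<in> D a \<Longrightarrow> p \<in> D b \<Longrightarrow>
    V (sup a b) p = max (V a p) (V b p)"
  using hom unfolding S_inj_lattice_hom_def S_eq_def S_sup_def by simp

lemma T_inj: "a \<in> B \<Longrightarrow> b \<in> B \<Longrightarrow> S_eq (T a) (T b) \<Longrightarrow> a = b"
  using hom unfolding S_inj_lattice_hom_def by blast

lemma V_zero: "p \<in> D 0 \<Longrightarrow> V 0 p = 0"
  using V_scaleR[OF zero_in_B, of p 0] by simp

lemma V_minus: "a \<in> B \<Longrightarrow> p \<in> D (- a) \<Longrightarrow> p \<in> D a \<Longrightarrow> V (- a) p = - V a p"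
  using V_scaleR[of a p "-1"] by simp

lemma V_unit: "p \<in> D u \<Longrightarrow> V u p = 1"
  using T_unit D_subset[OF unit_in_B] unfolding S_eq_def S_one_def by auto

text \<open>Identities between the \<open>V a\<close> only hold where all the representatives involved are defined;
  they are checked on such a common domain, which is dense, and extended by continuity.\<close>

definition common_dom :: "'e set \<Rightarrow> 'x set" where
  "common_dom F = topspace X \<inter> (\<Inter>a\<in>F. D a)"

lemma dense_common_dom:
  assumes "finite F" "F \<subseteq> B"
  shows "X closure_of (common_dom F) = topspace X"
proof -
  from assms have "openin X (common_dom F) \<and> X closure_of (common_dom F) = topspace X"
  proof (induction F rule: finite_induct)
    case (insert a F)
    then have "common_dom (insert a F) = D a \<inter> common_dom F"
      using D_subset[of a] by (auto simp: common_dom_def)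
    with insert show ?case
      using openin_D[of a] dense_D[of a] dense_open_Int[of X "D a" "common_dom F"] by auto
  qed (simp add: common_dom_def)
  then show ?thesis
    by simp
qed

lemma exists_in_common_dom:
  assumes "openin X N" "N \<noteq> {}" "finite F" "F \<subseteq> B"
  obtains q where "q \<in> N" "q \<in> common_dom F"
  using dense_common_dom[OF assms(3,4)] assms(1,2) unfolding dense_intersects_open by blast

lemma V_eq_on_common_dom:
  assumes a: "a \<in> B" and U: "openin X U" "U \<subseteq> D a"
    and f: "continuous_map (subtopology X U) euclideanreal f"
    and F: "finite F" "F \<subseteq> B"
    and eq: "\<And>q. q \<in> U \<Longrightarrow> q \<in> common_dom F \<Longrightarrow> V a q = f q"
    and q: "q \<in> U"
  shows "V a q = f q"
  using continuous_map_le_on_dense[OF U(1) continuous_V[OF a U(2)] f _ _ q]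
    continuous_map_le_on_dense[OF U(1) f continuous_V[OF a U(2)] _ _ q]
    dense_common_dom[OF F] eq
  by (metis antisym order_refl)

lemma V_diff:
  assumes a: "a \<in> B" and b: "b \<in> B" and p: "p \<in> D (a - b)" "p \<in> D a" "p \<in> D b"
  shows "V (a - b) p = V a p - V b p"
proof (rule V_eq_on_common_dom[of "a - b" "D (a - b) \<inter> D a \<inter> D b" _ "{- b}"])
  fix q assume q: "q \<in> D (a - b) \<inter> D a \<inter> D b" "q \<in> common_dom {- b}"
  then have "V (a + - b) q = V a q + V (- b) q"
    using a b by (intro V_add minus_in_B) (auto simp: common_dom_def)
  with q show "V (a - b) q = V a q - V b q"
    using V_minus[OF b] by (simp add: common_dom_def)
qed (use a b p openin_D diff_in_B minus_in_B in
      \<open>auto intro!: openin_Int continuous_map_diff continuous_V\<close>)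

lemma V_inf:
  assumes a: "a \<in> B" and b: "b \<in> B" and p: "p \<in> D (inf a b)" "p \<in> D a" "p \<in> D b"
  shows "V (inf a b) p = min (V a p) (V b p)"
proof (rule V_eq_on_common_dom[of "inf a b" "D (inf a b) \<inter> D a \<inter> D b" _ "{- a, - b, sup (- a) (- b)}"])
  fix q assume q: "q \<in> D (inf a b) \<inter> D a \<inter> D b" "q \<in> common_dom {- a, - b, sup (- a) (- b)}"
  have ab: "- a \<in> B" "- b \<in> B" "sup (- a) (- b) \<in> B"
    using a b by (auto intro: minus_in_B sup_in_B)
  have qs: "q \<in> D (- a)" "q \<in> D (- b)" "q \<in> D (sup (- a) (- b))"
    using q(2) by (simp_all add: common_dom_def)
  have q': "q \<in> D (- sup (- a) (- b))"
    using q(1) by (simp only: vl.inf_eq_neg_sup[of a b] Int_iff)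
  have "V (inf a b) q = V (- sup (- a) (- b)) q"
    by (simp only: vl.inf_eq_neg_sup[of a b])
  also have "\<dots> = - max (V (- a) q) (V (- b) q)"
    using V_minus[OF ab(3) q' qs(3)] V_sup[OF ab(1,2) qs(3,1,2)] by simp
  also have "\<dots> = min (V a q) (V b q)"
    using V_minus[OF a qs(1)] V_minus[OF b qs(2)] q(1) by simp
  finally show "V (inf a b) q = min (V a q) (V b q)" .
qed (use a b p openin_D inf_in_B minus_in_B sup_in_B in
      \<open>auto intro!: openin_Int continuous_map_real_min continuous_V\<close>)

lemma V_abs:
  assumes a: "a \<in> B" and p: "p \<in> D (vl_abs a)" "p \<in> D a"
  shows "V (vl_abs a) p = \<bar>V a p\<bar>"
proof (rule V_eq_on_common_dom[of "vl_abs a" "D (vl_abs a) \<inter> D a" _ "{- a}"])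
  fix q assume q: "q \<in> D (vl_abs a) \<inter> D a" "q \<in> common_dom {- a}"
  then show "V (vl_abs a) q = \<bar>V a q\<bar>"
    using a V_minus[OF a] V_sup[OF a minus_in_B[OF a], of q]
    by (auto simp: common_dom_def vl_abs_def)
qed (use a p openin_D abs_in_B minus_in_B in \<open>auto intro!: openin_Int continuous_map_real_abs continuous_V\<close>)

lemma V_mono: "a \<in> B \<Longrightarrow> b \<in> B \<Longrightarrow> a \<le> b \<Longrightarrow> p \<in> D a \<Longrightarrow> p \<in> D b \<Longrightarrow> V a p \<le> V b p"
  using V_sup[of a b p] by (simp add: sup_absorb2)

lemma V_nonneg:
  assumes a: "a \<in> B" "0 \<le> a" and p: "p \<in> D a"
  shows "0 \<le> V a p"
proof (rule continuous_map_le_on_dense[OF openin_D[OF a(1)] _ continuous_V[OF a(1) order_refl]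
      dense_D[OF zero_in_B] _ p])
  show "\<And>q. q \<in> D a \<Longrightarrow> q \<in> D 0 \<Longrightarrow> 0 \<le> V a q"
    using V_mono[OF zero_in_B a(1) a(2)] V_zero by fastforce
qed simp

lemma le_of_S_le:
  assumes a: "a \<in> B" and b: "b \<in> B" and le: "S_le (T a) (T b)"
  shows "a \<le> b"
proof -
  have "S_eq (T (sup a b)) (T b)"
  proof (rule S_eq_on_dense[OF T_elem T_elem dense_D[OF a]])
    fix q assume "q \<in> D (sup a b)" "q \<in> D b" "q \<in> D a"
    then show "V (sup a b) q = V b q"
      using V_sup[OF a b] le unfolding S_le_def by fastforce
  qed (use a b sup_in_B in auto)
  then have "sup a b = b"
    using a b by (intro T_inj sup_in_B)
  then show ?thesis
    by (simp add: le_iff_sup)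
qed

lemma approx_continuous:
  assumes "continuous_map X euclideanreal h" "0 < \<epsilon>"
  obtains v h' where "v \<in> B" "continuous_map X euclideanreal h'"
    "\<And>q. q \<in> D v \<Longrightarrow> V v q = h' q" "\<And>q. q \<in> topspace X \<Longrightarrow> \<bar>h q - h' q\<bar> < \<epsilon>"
proof -
  obtain v h' where v: "v \<in> generated_ideal B u" "continuous_map X euclideanreal h'"
    "S_eq (T v) (topspace X, h')" "\<forall>q\<in>topspace X. \<bar>h q - h' q\<bar> < \<epsilon>"
    using dense_image assms unfolding sup_closure_is_C_def by meson
  then have vB: "v \<in> B"
    unfolding generated_ideal_def by blast
  moreover have "V v q = h' q" if "q \<in> D v" for q
    using v(3) D_subset[OF vB] that unfolding S_eq_def by auto
  ultimately show ?thesis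
    using that v(2,4) by blast
qed

lemma V_pprt_diff_unit:
  assumes v: "v \<in> B" and q: "q \<in> D (sup (v - c *\<^sub>R u) 0)" "q \<in> D v"
  shows "V (sup (v - c *\<^sub>R u) 0) q = max (V v q - c) 0"
proof -
  let ?F = "{v - c *\<^sub>R u, 0, c *\<^sub>R u, u}"
  have F: "?F \<subseteq> B"
    using v unit_in_B by (auto intro: diff_in_B scaleR_in_B zero_in_B)
  then have eB: "sup (v - c *\<^sub>R u) 0 \<in> B"
    by (auto intro: sup_in_B)
  show ?thesis
  proof (rule V_eq_on_common_dom[OF eB _ _ _ _ F])
    fix r assume r: "r \<in> D (sup (v - c *\<^sub>R u) 0) \<inter> D v" "r \<in> common_dom ?F"
    then show "V (sup (v - c *\<^sub>R u) 0) r = max (V v r - c) 0"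
      using F v unit_in_B by (simp add: common_dom_def V_sup V_diff V_zero V_scaleR V_unit)
  qed (use v q eB in \<open>auto intro!: openin_Int openin_D continuous_map_real_max continuous_map_diff
      continuous_V\<close>)
qed

lemma approx_below:
  assumes h: "continuous_map X euclideanreal h" "\<And>q. q \<in> topspace X \<Longrightarrow> 0 \<le> h q"
    and \<epsilon>: "0 < \<epsilon>"
  obtains e where "e \<in> B" "0 \<le> e" "\<And>q. q \<in> D e \<Longrightarrow> V e q \<le> h q"
    "\<And>q. q \<in> D e \<Longrightarrow> h q - \<epsilon> < V e q"
proof -
  have "0 < \<epsilon> / 2"
    using \<epsilon> by simp
  then obtain v h' where v: "v \<in> B" "continuous_map X euclideanreal h'"
      "\<And>q. q \<in> D v \<Longrightarrow> V v q = h' q" "\<And>q. q \<in> topspace X \<Longrightarrow> \<bar>h q - h' q\<bar> < \<epsilon> / 2"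
    using approx_continuous[OF h(1)] by blast
  \<comment> \<open>\<open>e\<close> represents \<open>max (h' - \<epsilon>/2) 0\<close>, which lies between \<open>h - \<epsilon>\<close> and \<open>h\<close>.\<close>
  define e where "e = sup (v - (\<epsilon> / 2) *\<^sub>R u) 0"
  have eB: "e \<in> B"
    unfolding e_def using v(1) unit_in_B by (intro sup_in_B diff_in_B scaleR_in_B zero_in_B)
  have e_val: "V e q = max (h' q - \<epsilon> / 2) 0" if "q \<in> D e" "q \<in> D v" for q
    using V_pprt_diff_unit[OF v(1)] v(3) that unfolding e_def by simp
  have cont: "continuous_map (subtopology X (D e)) euclideanreal f"
    if "continuous_map X euclideanreal f" for f
    using that by (rule continuous_map_from_subtopology)
  have le: "V e q \<le> h q" if q: "q \<in> D e" for q
  proof (rule continuous_map_le_on_dense[OF openin_D[OF eB] continuous_V[OF eB order_refl]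
        cont[OF h(1)] dense_D[OF v(1)] _ q])
    fix r assume r: "r \<in> D e" "r \<in> D v"
    then have "r \<in> topspace X"
      using D_subset[OF eB] by blast
    then show "V e r \<le> h r"
      using e_val[OF r] v(4)[of r] h(2)[of r] unfolding abs_less_iff by simp
  qed
  have ge: "h' q - \<epsilon> / 2 \<le> V e q" if q: "q \<in> D e" for q
  proof (rule continuous_map_le_on_dense[OF openin_D[OF eB] _ continuous_V[OF eB order_refl]
        dense_D[OF v(1)] _ q])
    show "continuous_map (subtopology X (D e)) euclideanreal (\<lambda>q. h' q - \<epsilon> / 2)"
      using v(2) by (intro cont continuous_map_diff) auto
  qed (use e_val in simp)
  show thesis
  proof (rule that[OF eB])
    show "0 \<le> e"
      by (simp add: e_def)
    fix q assume q: "q \<in> D e"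
    then show "V e q \<le> h q"
      by (rule le)
    have "q \<in> topspace X"
      using D_subset[OF eB] q by blast
    then show "h q - \<epsilon> < V e q"
      using ge[OF q] v(4)[of q] unfolding abs_less_iff by simp
  qed
qed

lemma bump_element:
  assumes N: "openin X N" and p: "p \<in> N" and c: "0 < c" and \<delta>: "0 < \<delta>"
  obtains e N' where "e \<in> B" "0 \<le> e" "openin X N'" "p \<in> N'"
    "\<And>q. q \<in> D e \<Longrightarrow> V e q \<le> c" "\<And>q. q \<in> D e \<Longrightarrow> q \<notin> N \<Longrightarrow> V e q \<le> 0"
    "\<And>q. q \<in> D e \<Longrightarrow> q \<in> N' \<Longrightarrow> c - \<delta> < V e q"
proof -
  obtain \<phi> where \<phi>: "continuous_map X euclideanreal \<phi>" "\<phi> p = 1"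
      "\<And>q. q \<in> topspace X \<Longrightarrow> 0 \<le> \<phi> q \<and> \<phi> q \<le> 1"
      "\<And>q. q \<in> topspace X \<Longrightarrow> q \<notin> N \<Longrightarrow> \<phi> q = 0"
    using compact_Hausdorff_bump[OF compact Hausdorff N p] by blast
  have c\<phi>: "continuous_map X euclideanreal (\<lambda>q. c * \<phi> q)"
    using \<phi>(1) by (rule continuous_map_real_mult_left)
  have "0 \<le> c * \<phi> q" if "q \<in> topspace X" for q
    using \<phi>(3)[OF that] c by simp
  moreover have "0 < \<delta> / 2"
    using \<delta> by simp
  ultimately obtain e where e: "e \<in> B" "0 \<le> e" "\<And>q. q \<in> D e \<Longrightarrow> V e q \<le> c * \<phi> q"
      "\<And>q. q \<in> D e \<Longrightarrow> c * \<phi> q - \<delta> / 2 < V e q"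
    using approx_below[OF c\<phi>] by blast
  define N' where "N' = {q \<in> topspace X. c - \<delta> / 2 < c * \<phi> q}"
  show thesis
  proof (rule that[OF e(1,2)])
    show "openin X N'"
      unfolding N'_def using openin_continuous_map_preimage[OF c\<phi>, of "{c - \<delta> / 2<..}"] by simp
    show "p \<in> N'"
      using p openin_subset[OF N] \<phi>(2) \<delta> unfolding N'_def by auto
    fix q assume q: "q \<in> D e"
    then have "q \<in> topspace X"
      using D_subset[OF e(1)] by blast
    moreover have "c * \<phi> q \<le> c" if "q \<in> topspace X"
      using \<phi>(3)[OF that] c by (simp add: mult_left_le)
    ultimately show "V e q \<le> c" "q \<notin> N \<Longrightarrow> V e q \<le> 0"
      using e(3)[OF q] \<phi>(4)[of q] by simp_all
    show "q \<in> N' \<Longrightarrow> c - \<delta> < V e q"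
      using e(4)[OF q] unfolding N'_def by simp
  qed
qed

lemma openin_level_sets:
  assumes a: "a \<in> B" and g: "S_elem X (G, g)"
  shows "openin X {q \<in> D a \<inter> G. V a q < c}" "openin X {q \<in> D a \<inter> G. c < V a q}"
    "openin X {q \<in> D a \<inter> G. g q < c}" "openin X {q \<in> D a \<inter> G. c < g q}"
proof -
  have U: "openin X (D a \<inter> G)"
    using openin_D[OF a] g unfolding S_elem_def by auto
  have Va: "continuous_map (subtopology X (D a \<inter> G)) euclideanreal (V a)"
    using continuous_V[OF a] by blast
  have g': "continuous_map (subtopology X (D a \<inter> G)) euclideanreal g"
    using g unfolding S_elem_def by (auto intro: continuous_map_from_subtopology_mono)
  show "openin X {q \<in> D a \<inter> G. V a q < c}" "openin X {q \<in> D a \<inter> G. c < V a q}"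
    "openin X {q \<in> D a \<inter> G. g q < c}" "openin X {q \<in> D a \<inter> G. c < g q}"
    by (rule openin_Collect_less[OF U]; simp add: Va g')+
qed

definition elements_below :: "'e \<Rightarrow> 'x sfun \<Rightarrow> 'e set" where
  "elements_below z g = {v \<in> B. 0 \<le> v \<and> v \<le> z \<and> S_le (T v) g}"

lemma inf_in_elements_below:
  assumes z: "z \<in> B" "0 \<le> z" and g: "S_elem X (G, g)" and e: "e \<in> B" "0 \<le> e"
    and le: "\<And>q. q \<in> D e \<Longrightarrow> q \<in> G \<Longrightarrow> V e q \<le> g q"
  shows "inf e z \<in> elements_below z (G, g)"
proof -
  have vB: "inf e z \<in> B"
    using e(1) z(1) by (rule inf_in_B)
  have "S_le (T (inf e z)) (G, g)"
  proof (rule S_le_on_dense[OF T_elem[OF vB] g dense_D[OF e(1)]])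
    fix q assume q: "q \<in> fst (T (inf e z))" "q \<in> fst (G, g)" "q \<in> D e"
    have "V (inf e z) q \<le> V e q"
      using V_mono[OF vB e(1)] q by simp
    also have "\<dots> \<le> g q"
      using le q by simp
    finally show "snd (T (inf e z)) q \<le> snd (G, g) q"
      by simp
  qed
  then show ?thesis
    using vB e(2) z(2) unfolding elements_below_def by (auto simp: le_infI2)
qed

lemma elements_below_le_diff:
  assumes g: "S_elem X (G, g)" and w: "is_sup (elements_below z (G, g)) w" "w \<in> B"
    and e: "e \<in> B" and le: "\<And>q. q \<in> D w \<Longrightarrow> q \<in> D e \<Longrightarrow> q \<in> G \<Longrightarrow> V e q \<le> max (V w q - g q) 0"
    and v: "v \<in> elements_below z (G, g)"
  shows "v \<le> w - e"
proof -
  have vB: "v \<in> B" and vg: "S_le (T v) (G, g)"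
    using v unfolding elements_below_def by auto
  have vw: "v \<le> w"
    using v w(1) unfolding is_sup_def by blast
  have w'B: "w - e \<in> B"
    using w(2) e by (rule diff_in_B)
  have "finite {w, e}" "{w, e} \<subseteq> B"
    using w(2) e by auto
  then have E: "X closure_of (G \<inter> common_dom {w, e}) = topspace X"
    using g dense_open_Int[OF _ _ dense_common_dom] unfolding S_elem_def by simp
  have "S_le (T v) (T (w - e))"
  proof (rule S_le_on_dense[OF T_elem[OF vB] T_elem[OF w'B] E])
    fix q assume q: "q \<in> fst (T v)" "q \<in> fst (T (w - e))" "q \<in> G \<inter> common_dom {w, e}"
    then have qs: "q \<in> D w" "q \<in> D e" "q \<in> G"
      by (auto simp: common_dom_def)
    have "V (w - e) q = V w q - V e q"
      using V_diff[OF w(2) e] q qs by simp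
    moreover have "V v q \<le> g q" "V v q \<le> V w q"
      using vg q qs V_mono[OF vB w(2) vw] unfolding S_le_def by auto
    ultimately show "snd (T v) q \<le> snd (T (w - e)) q"
      using le[OF qs] by (simp add: max_def split: if_splits)
  qed
  then show ?thesis
    by (rule le_of_S_le[OF vB w'B])
qed

lemma sup_elements_below_ge:
  assumes z: "z \<in> B" "0 \<le> z"
    and g: "S_elem X (G, g)" "\<And>q. q \<in> G \<Longrightarrow> 0 \<le> g q" "S_le (G, g) (T z)"
    and w: "is_sup (elements_below z (G, g)) w" "w \<in> B" "0 \<le> w"
    and p: "p \<in> D w" "p \<in> G"
  shows "g p \<le> V w p"
proof (rule ccontr)
  assume "\<not> g p \<le> V w p"
  then obtain m1 m2 where m: "V w p < m1" "m1 < m2" "m2 < g p"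
    by (meson dense not_le)
  define N where "N = {q \<in> D w \<inter> G. V w q < m1} \<inter> {q \<in> D w \<inter> G. m2 < g q}"
  have N: "openin X N"
    unfolding N_def by (intro openin_Int openin_level_sets[OF w(2) g(1)])
  have pN: "p \<in> N" and c: "0 < m2" and \<delta>: "0 < m2 - m1"
    using p m V_nonneg[OF w(2,3) p(1)] unfolding N_def by simp_all
  obtain e N' where e: "e \<in> B" "0 \<le> e" "openin X N'" "p \<in> N'"
      "\<And>q. q \<in> D e \<Longrightarrow> V e q \<le> m2" "\<And>q. q \<in> D e \<Longrightarrow> q \<notin> N \<Longrightarrow> V e q \<le> 0"
      "\<And>q. q \<in> D e \<Longrightarrow> q \<in> N' \<Longrightarrow> m2 - (m2 - m1) < V e q"
    using bump_element[OF N pN c \<delta>] by auto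
  \<comment> \<open>\<open>inf e z\<close> lies below \<open>g\<close>, hence below \<open>w\<close>, but exceeds \<open>w\<close> near \<open>p\<close>.\<close>
  have "V e q \<le> g q" if "q \<in> D e" "q \<in> G" for q
    using e(5,6) g(2) that unfolding N_def by fastforce
  then have "inf e z \<in> elements_below z (G, g)"
    by (rule inf_in_elements_below[OF z g(1) e(1,2)])
  then have vw: "inf e z \<le> w"
    using w(1) unfolding is_sup_def by blast
  obtain q where q: "q \<in> N \<inter> N'" "q \<in> common_dom {w, z, e, inf e z}"
    using exists_in_common_dom[of "N \<inter> N'" "{w, z, e, inf e z}"] N e(1,3,4) pN w(2) z(1)
    by (auto intro: inf_in_B)
  then have qs: "q \<in> D w" "q \<in> D z" "q \<in> D e" "q \<in> D (inf e z)" "q \<in> G"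
    by (simp_all add: N_def common_dom_def)
  have "m2 < g q" "g q \<le> V z q"
    using q(1) qs g(3) unfolding N_def S_le_def by auto
  then have "m1 < V (inf e z) q"
    using V_inf[OF e(1) z(1), of q] qs e(7)[OF qs(3)] q(1) m(2) by simp
  moreover have "V (inf e z) q \<le> V w q"
    using V_mono[OF inf_in_B[OF e(1) z(1)] w(2) vw qs(4,1)] .
  ultimately show False
    using q(1) unfolding N_def by simp
qed

lemma sup_elements_below_le:
  assumes g: "S_elem X (G, g)"
    and w: "is_sup (elements_below z (G, g)) w" "w \<in> B"
    and p: "p \<in> D w" "p \<in> G"
  shows "V w p \<le> g p"
proof (rule ccontr)
  assume "\<not> V w p \<le> g p"
  then obtain m1 m2 where m: "g p < m1" "m1 < m2" "m2 < V w p"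
    by (meson dense not_le)
  define N where "N = {q \<in> D w \<inter> G. m2 < V w q} \<inter> {q \<in> D w \<inter> G. g q < m1}"
  have N: "openin X N"
    unfolding N_def by (intro openin_Int openin_level_sets[OF w(2) g])
  have pN: "p \<in> N" and c: "0 < m2 - m1"
    using p m unfolding N_def by simp_all
  obtain e N' where e: "e \<in> B" "0 \<le> e" "openin X N'" "p \<in> N'"
      "\<And>q. q \<in> D e \<Longrightarrow> V e q \<le> m2 - m1" "\<And>q. q \<in> D e \<Longrightarrow> q \<notin> N \<Longrightarrow> V e q \<le> 0"
      "\<And>q. q \<in> D e \<Longrightarrow> q \<in> N' \<Longrightarrow> m2 - m1 - (m2 - m1) < V e q"
    using bump_element[OF N pN c c] by auto
  \<comment> \<open>\<open>w - e\<close> is still an upper bound of the elements below \<open>g\<close>, so \<open>e = 0\<close>; but \<open>e > 0\<close> near \<open>p\<close>.\<close>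
  have "V e q \<le> max (V w q - g q) 0" if "q \<in> D w" "q \<in> D e" "q \<in> G" for q
    using e(5,6) that unfolding N_def by fastforce
  then have "w \<le> w - e"
    using w(1) elements_below_le_diff[OF g w e(1)] unfolding is_sup_def by blast
  then have "e = 0"
    using e(2) by (simp add: antisym)
  obtain q where "q \<in> N'" "q \<in> common_dom {e}"
    using exists_in_common_dom[of N' "{e}"] e(1,3,4) by auto
  then show False
    using e(7) V_zero \<open>e = 0\<close> by (fastforce simp: common_dom_def)
qed

lemma exists_preimage_below:
  assumes z: "z \<in> B" "0 \<le> z"
    and g: "S_elem X (G, g)" "\<And>q. q \<in> G \<Longrightarrow> 0 \<le> g q" "S_le (G, g) (T z)"
  obtains w where "w \<in> B" "0 \<le> w" "w \<le> z" "S_eq (T w) (G, g)"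
proof -
  let ?W = "elements_below z (G, g)"
  have "0 \<in> ?W"
    using z(2) g(2) V_zero zero_in_B unfolding elements_below_def S_le_def by auto
  moreover have "bdd_above ?W"
    unfolding elements_below_def bdd_above_def by blast
  ultimately obtain w where w: "is_sup ?W w"
    using complete unfolding order_complete_def by blast
  have "?W \<subseteq> B"
    unfolding elements_below_def by blast
  then have wB: "w \<in> B"
    using band w unfolding vl_band_def by blast
  have "0 \<le> w" "w \<le> z"
    using w \<open>0 \<in> ?W\<close> unfolding is_sup_def elements_below_def by auto
  moreover have "S_eq (T w) (G, g)"
    using sup_elements_below_ge[OF z g w wB \<open>0 \<le> w\<close>] sup_elements_below_le[OF g(1) w wB]
    unfolding S_eq_def by (auto intro: antisym)
  ultimately show thesis
    using wB that by blast
qed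

lemma exists_preimage_signed_part:
  assumes a: "a \<in> B" and g: "S_elem X (G, g)" and le: "S_le (S_abs (G, g)) (S_abs (T a))"
    and s: "s = 1 \<or> s = -1"
  shows "\<exists>w\<in>B. 0 \<le> w \<and> w \<le> vl_abs a \<and> S_eq (T w) (G, \<lambda>q. max (s * g q) 0)"
proof -
  have zB: "vl_abs a \<in> B"
    using a by (rule abs_in_B)
  have elem: "S_elem X (G, \<lambda>q. max (s * g q) 0)"
    using g unfolding S_elem_def
    by (auto intro: continuous_map_real_max continuous_map_real_mult_left)
  have "S_le (G, \<lambda>q. max (s * g q) 0) (T (vl_abs a))"
  proof (rule S_le_on_dense[OF elem T_elem[OF zB] dense_D[OF a]])
    fix q assume q: "q \<in> fst (G, \<lambda>q. max (s * g q) 0)" "q \<in> D (vl_abs a)" "q \<in> D a"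
    have "max (s * g q) 0 \<le> \<bar>g q\<bar>"
      using s by auto
    also have "\<bar>g q\<bar> \<le> \<bar>V a q\<bar>"
      using le q unfolding S_le_def S_abs_def by auto
    finally show "snd (G, \<lambda>q. max (s * g q) 0) q \<le> snd (T (vl_abs a)) q"
      using V_abs[OF a q(2,3)] by simp
  qed
  then show ?thesis
    using exists_preimage_below[OF zB vl.abs_ge_zero elem] by (metis max.cobounded2 snd_conv)
qed

lemma exists_preimage_abs_le:
  assumes a: "a \<in> B" and g: "S_elem X (G, g)" and le: "S_le (S_abs (G, g)) (S_abs (T a))"
  obtains w\<^sub>1 w\<^sub>2 where "w\<^sub>1 \<in> B" "0 \<le> w\<^sub>1" "w\<^sub>1 \<le> vl_abs a" "w\<^sub>2 \<in> B" "0 \<le> w\<^sub>2" "w\<^sub>2 \<le> vl_abs a"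
    "S_eq (T (w\<^sub>1 - w\<^sub>2)) (G, g)"
proof -
  obtain w\<^sub>1 where w\<^sub>1: "w\<^sub>1 \<in> B" "0 \<le> w\<^sub>1" "w\<^sub>1 \<le> vl_abs a" "S_eq (T w\<^sub>1) (G, \<lambda>q. max (g q) 0)"
    using exists_preimage_signed_part[OF a g le, of 1] by auto
  obtain w\<^sub>2 where w\<^sub>2: "w\<^sub>2 \<in> B" "0 \<le> w\<^sub>2" "w\<^sub>2 \<le> vl_abs a" "S_eq (T w\<^sub>2) (G, \<lambda>q. max (- g q) 0)"
    using exists_preimage_signed_part[OF a g le, of "-1"] by auto
  have dB: "w\<^sub>1 - w\<^sub>2 \<in> B"
    using w\<^sub>1(1) w\<^sub>2(1) by (rule diff_in_B)
  have "S_eq (T (w\<^sub>1 - w\<^sub>2)) (G, g)"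
  proof (rule S_eq_on_dense[OF T_elem[OF dB] g dense_open_Int[OF openin_D dense_D dense_D]])
    fix q assume q: "q \<in> D (w\<^sub>1 - w\<^sub>2)" "q \<in> fst (G, g)" "q \<in> D w\<^sub>1 \<inter> D w\<^sub>2"
    then have "V w\<^sub>1 q = max (g q) 0" "V w\<^sub>2 q = max (- g q) 0"
      using w\<^sub>1(4) w\<^sub>2(4) unfolding S_eq_def by auto
    then show "snd (T (w\<^sub>1 - w\<^sub>2)) q = snd (G, g) q"
      using V_diff[OF w\<^sub>1(1) w\<^sub>2(1)] q by auto
  qed (use w\<^sub>1(1) w\<^sub>2(1) in auto)
  with w\<^sub>1 w\<^sub>2 show thesis
    using that by blast
qed

end

section \<open>Gluing the bands\<close>

locale wickstead_rep =
  fixes I :: "'i set"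
    and B :: "'i \<Rightarrow> 'e::{ordered_real_vector,lattice} set"
    and u :: "'i \<Rightarrow> 'e"
    and y :: "'e \<Rightarrow> 'i \<Rightarrow> 'e"
    and X :: "'i \<Rightarrow> 'x topology"
    and T :: "'i \<Rightarrow> 'e \<Rightarrow> 'x sfun"
  assumes complete: "order_complete TYPE('e)"
    and bands: "\<And>\<alpha>. \<alpha> \<in> I \<Longrightarrow> vl_band (B \<alpha>)"
    and disj: "\<And>\<alpha> \<beta> a b. \<alpha> \<in> I \<Longrightarrow> \<beta> \<in> I \<Longrightarrow> \<alpha> \<noteq> \<beta> \<Longrightarrow> a \<in> B \<alpha> \<Longrightarrow> b \<in> B \<beta> \<Longrightarrow> vl_disjoint a b"
    and units: "\<And>\<alpha>. \<alpha> \<in> I \<Longrightarrow> weak_unit (B \<alpha>) (u \<alpha>)"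
    and comp_in: "\<And>x \<alpha>. \<alpha> \<in> I \<Longrightarrow> y x \<alpha> \<in> B \<alpha>"
    and comp_rest: "\<And>x \<alpha> b. \<alpha> \<in> I \<Longrightarrow> b \<in> B \<alpha> \<Longrightarrow> vl_disjoint (x - y x \<alpha>) b"
    and decomp: "\<And>x. 0 \<le> x \<Longrightarrow> is_sup (y x ` I) x"
    and cpt: "\<And>\<alpha>. \<alpha> \<in> I \<Longrightarrow> compact_space (X \<alpha>)"
    and hd: "\<And>\<alpha>. \<alpha> \<in> I \<Longrightarrow> Hausdorff_space (X \<alpha>)"
    and hom: "\<And>\<alpha>. \<alpha> \<in> I \<Longrightarrow> S_inj_lattice_hom (X \<alpha>) (B \<alpha>) (T \<alpha>)"
    and one: "\<And>\<alpha>. \<alpha> \<in> I \<Longrightarrow> S_eq (T \<alpha> (u \<alpha>)) (S_one (X \<alpha>))"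
    and dense: "\<And>\<alpha>. \<alpha> \<in> I \<Longrightarrow> sup_closure_is_C (X \<alpha>) (T \<alpha>) (generated_ideal (B \<alpha>) (u \<alpha>))"
begin

lemma band_rep: "\<alpha> \<in> I \<Longrightarrow> band_rep (X \<alpha>) (B \<alpha>) (u \<alpha>) (T \<alpha>)"
  by unfold_locales (simp_all add: complete bands units cpt hd hom one dense)

lemma component_unique:
  assumes \<alpha>: "\<alpha> \<in> I" and q: "q \<in> B \<alpha>" and rest: "\<And>b. b \<in> B \<alpha> \<Longrightarrow> vl_disjoint (x - q) b"
  shows "y x \<alpha> = q"
proof -
  interpret band_rep "X \<alpha>" "B \<alpha>" "u \<alpha>" "T \<alpha>"
    using \<alpha> by (rule band_rep)
  have "vl_disjoint ((x - q) - (x - y x \<alpha>)) (u \<alpha>)"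
    using rest[OF unit_in_B] comp_rest[OF \<alpha> unit_in_B] by (rule vl_disjoint_diff)
  then have "inf (vl_abs (y x \<alpha> - q)) (u \<alpha>) = 0"
    unfolding vl_disjoint_def using unit_nonneg by (simp add: vl.abs_of_nonneg)
  moreover have "y x \<alpha> - q \<in> B \<alpha>"
    using comp_in[OF \<alpha>] q by (rule diff_in_B)
  ultimately show ?thesis
    using unit unfolding weak_unit_def by auto
qed

lemma component_add:
  assumes \<alpha>: "\<alpha> \<in> I"
  shows "y (x\<^sub>1 + x\<^sub>2) \<alpha> = y x\<^sub>1 \<alpha> + y x\<^sub>2 \<alpha>"
proof (rule component_unique[OF \<alpha>])
  show "y x\<^sub>1 \<alpha> + y x\<^sub>2 \<alpha> \<in> B \<alpha>"
    using comp_in[OF \<alpha>] by (intro band_rep.add_in_B[OF band_rep[OF \<alpha>]])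
  fix b assume "b \<in> B \<alpha>"
  then have "vl_disjoint ((x\<^sub>1 - y x\<^sub>1 \<alpha>) + (x\<^sub>2 - y x\<^sub>2 \<alpha>)) b"
    using comp_rest[OF \<alpha>] by (intro vl_disjoint_add)
  then show "vl_disjoint (x\<^sub>1 + x\<^sub>2 - (y x\<^sub>1 \<alpha> + y x\<^sub>2 \<alpha>)) b"
    by (simp add: algebra_simps)
qed

lemma component_scaleR:
  assumes \<alpha>: "\<alpha> \<in> I"
  shows "y (c *\<^sub>R x) \<alpha> = c *\<^sub>R y x \<alpha>"
proof (rule component_unique[OF \<alpha>])
  show "c *\<^sub>R y x \<alpha> \<in> B \<alpha>"
    using comp_in[OF \<alpha>] by (intro band_rep.scaleR_in_B[OF band_rep[OF \<alpha>]])
  fix b assume "b \<in> B \<alpha>"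
  then have "vl_disjoint (c *\<^sub>R (x - y x \<alpha>)) b"
    using comp_rest[OF \<alpha>] by (intro vl_disjoint_scaleR)
  then show "vl_disjoint (c *\<^sub>R x - c *\<^sub>R y x \<alpha>) b"
    by (simp add: scaleR_diff_right)
qed

lemma component_diff: "\<alpha> \<in> I \<Longrightarrow> y (x\<^sub>1 - x\<^sub>2) \<alpha> = y x\<^sub>1 \<alpha> - y x\<^sub>2 \<alpha>"
  using component_add[of \<alpha> x\<^sub>1 "(-1) *\<^sub>R x\<^sub>2"] component_scaleR[of \<alpha> "-1" x\<^sub>2] by simp

lemma component_bounds:
  assumes \<alpha>: "\<alpha> \<in> I" and x: "0 \<le> x"
  shows "0 \<le> y x \<alpha>" "y x \<alpha> \<le> x"
proof -
  interpret band_rep "X \<alpha>" "B \<alpha>" "u \<alpha>" "T \<alpha>"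
    using \<alpha> by (rule band_rep)
  show le: "y x \<alpha> \<le> x"
    using decomp[OF x] \<alpha> unfolding is_sup_def by blast
  \<comment> \<open>The negative part of \<open>y x \<alpha>\<close> lies in the band and below \<open>x - y x \<alpha>\<close>, which is disjoint from the band.\<close>
  let ?n = "sup (- y x \<alpha>) 0"
  have "?n \<in> B \<alpha>"
    using comp_in[OF \<alpha>] by (intro pprt_in_B minus_in_B)
  then have "vl_disjoint (x - y x \<alpha>) ?n"
    by (rule comp_rest[OF \<alpha>])
  then have "inf (x - y x \<alpha>) ?n = 0"
    using le by (simp add: vl_disjoint_nonneg_iff)
  moreover have "?n \<le> x - y x \<alpha>"
    using x le by simp
  ultimately have "?n = 0"
    by (simp add: inf_absorb2)
  then have "- y x \<alpha> \<le> 0"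
    by (simp add: sup.absorb_iff2)
  then show "0 \<le> y x \<alpha>"
    by simp
qed

lemma abs_component_le:
  assumes \<alpha>: "\<alpha> \<in> I"
  shows "vl_abs (y x \<alpha>) \<le> vl_abs x"
proof -
  let ?P = "vl.pprt x" and ?M = "- vl.nprt x"
  have "y x \<alpha> = y (?P - ?M) \<alpha>"
    using vl.prts[of x] by simp
  also have "\<dots> = y ?P \<alpha> - y ?M \<alpha>"
    using \<alpha> by (rule component_diff)
  finally have "vl_abs (y x \<alpha>) \<le> vl_abs (y ?P \<alpha>) + vl_abs (y ?M \<alpha>)"
    by (simp add: vl.abs_triangle_ineq4)
  also have "\<dots> = y ?P \<alpha> + y ?M \<alpha>"
    using component_bounds(1)[OF \<alpha>, of ?P] component_bounds(1)[OF \<alpha>, of ?M]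
    by (simp add: vl.abs_of_nonneg)
  also have "\<dots> \<le> ?P + ?M"
    using component_bounds(2)[OF \<alpha>, of ?P] component_bounds(2)[OF \<alpha>, of ?M]
    by (intro add_mono) simp_all
  also have "\<dots> = vl_abs x"
    by (simp add: vl.abs_prts)
  finally show ?thesis .
qed

lemma inf_component:
  assumes \<alpha>: "\<alpha> \<in> I" and x: "0 \<le> x" and c: "c \<in> B \<alpha>" "0 \<le> c"
  shows "inf (y x \<alpha>) c = inf x c"
proof (rule antisym)
  show "inf (y x \<alpha>) c \<le> inf x c"
    using component_bounds[OF \<alpha> x] by (simp add: le_infI1)
  have "0 \<le> x - y x \<alpha>"
    using component_bounds[OF \<alpha> x] by simp
  then have "inf (x - y x \<alpha>) c = 0"
    using comp_rest[OF \<alpha> c(1), of x] c(2) by (simp add: vl_disjoint_nonneg_iff)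
  moreover have "inf x c \<le> inf (x - y x \<alpha>) c + inf (y x \<alpha>) c"
    using inf_add_le_add_inf[OF \<open>0 \<le> x - y x \<alpha>\<close> component_bounds(1)[OF \<alpha> x] c(2)] by simp
  ultimately show "inf x c \<le> inf (y x \<alpha>) c"
    by simp
qed

lemma is_sup_inf_band:
  assumes s: "is_sup (w ` I) s" and w: "\<And>\<beta>. \<beta> \<in> I \<Longrightarrow> w \<beta> \<in> B \<beta> \<and> 0 \<le> w \<beta>"
    and \<alpha>: "\<alpha> \<in> I" and c: "c \<in> B \<alpha>" "0 \<le> c"
  shows "inf s c = inf (w \<alpha>) c"
proof (rule antisym)
  show "inf s c \<le> inf (w \<alpha>) c"
  proof (rule is_sup_inf_le[OF s])
    fix p assume "p \<in> w ` I"
    then obtain \<beta> where \<beta>: "\<beta> \<in> I" "p = w \<beta>"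
      by blast
    show "inf p c \<le> inf (w \<alpha>) c"
    proof (cases "\<beta> = \<alpha>")
      case False
      then have "vl_disjoint (w \<beta>) c"
        using disj[OF \<beta>(1) \<alpha>] w[OF \<beta>(1)] c(1) by blast
      then have "inf (w \<beta>) c = 0"
        using w[OF \<beta>(1)] c(2) by (simp add: vl_disjoint_nonneg_iff)
      then show ?thesis
        using \<beta>(2) w[OF \<alpha>] c(2) by simp
    qed (use \<beta> in simp)
  qed
  show "inf (w \<alpha>) c \<le> inf s c"
    using s \<alpha> unfolding is_sup_def by (blast intro: inf_mono)
qed

lemma exists_with_components:
  assumes w: "\<And>\<beta>. \<beta> \<in> I \<Longrightarrow> w \<beta> \<in> B \<beta> \<and> 0 \<le> w \<beta> \<and> w \<beta> \<le> b"
  shows "\<exists>s. \<forall>\<alpha>\<in>I. y s \<alpha> = w \<alpha>"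
proof (cases "I = {}")
  case False
  then have "w ` I \<noteq> {}"
    by simp
  moreover have "bdd_above (w ` I)"
    using w unfolding bdd_above_def by blast
  ultimately obtain s where s: "is_sup (w ` I) s"
    using complete unfolding order_complete_def by metis
  have "y s \<alpha> = w \<alpha>" if \<alpha>: "\<alpha> \<in> I" for \<alpha>
  proof -
    interpret band_rep "X \<alpha>" "B \<alpha>" "u \<alpha>" "T \<alpha>"
      using \<alpha> by (rule band_rep)
    have s0: "0 \<le> s"
      using s \<alpha> w[OF \<alpha>] unfolding is_sup_def by (blast intro: order_trans)
    \<comment> \<open>\<open>y s \<alpha>\<close> and \<open>w \<alpha>\<close> meet every positive element of the band alike, in particular their supremum.\<close>
    have "inf (y s \<alpha>) c = inf (w \<alpha>) c" if "c \<in> B \<alpha>" "0 \<le> c" for c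
      using inf_component[OF \<alpha> s0 that] is_sup_inf_band[OF s _ \<alpha> that] w by simp
    moreover have "sup (y s \<alpha>) (w \<alpha>) \<in> B \<alpha>" "0 \<le> sup (y s \<alpha>) (w \<alpha>)"
      using comp_in[OF \<alpha>] w[OF \<alpha>] component_bounds(1)[OF \<alpha> s0] by (auto intro: sup_in_B le_supI1)
    ultimately show ?thesis
      by (metis inf_sup_absorb sup_commute)
  qed
  then show ?thesis
    by blast
qed simp

abbreviation rep :: "'e \<Rightarrow> 'i \<Rightarrow> 'x sfun" where
  "rep x \<equiv> \<lambda>\<alpha>. T \<alpha> (y x \<alpha>)"

lemma Sp_elem_rep: "Sp_elem X I (rep x)"
  unfolding Sp_elem_def using band_rep.T_elem[OF band_rep comp_in] by blast

lemma Sp_eq_rep_add: "Sp_eq I (rep (x\<^sub>1 + x\<^sub>2)) (Sp_add (rep x\<^sub>1) (rep x\<^sub>2))"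
  unfolding Sp_eq_def Sp_add_def
  using hom comp_in unfolding S_inj_lattice_hom_def by (simp add: component_add)

lemma Sp_eq_rep_scaleR: "Sp_eq I (rep (c *\<^sub>R x)) (Sp_scale c (rep x))"
  unfolding Sp_eq_def Sp_scale_def
  using hom comp_in unfolding S_inj_lattice_hom_def by (simp add: component_scaleR)

lemma rep_solid:
  assumes G: "Sp_elem X I G" and le: "Sp_le I (Sp_abs G) (Sp_abs (rep x))"
  shows "\<exists>s. Sp_eq I (rep s) G"
proof -
  have "\<exists>w\<^sub>1 w\<^sub>2. w\<^sub>1 \<in> B \<alpha> \<and> 0 \<le> w\<^sub>1 \<and> w\<^sub>1 \<le> vl_abs x \<and> w\<^sub>2 \<in> B \<alpha> \<and> 0 \<le> w\<^sub>2 \<and> w\<^sub>2 \<le> vl_abs x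
      \<and> S_eq (T \<alpha> (w\<^sub>1 - w\<^sub>2)) (G \<alpha>)" if \<alpha>: "\<alpha> \<in> I" for \<alpha>
  proof -
    interpret band_rep "X \<alpha>" "B \<alpha>" "u \<alpha>" "T \<alpha>"
      using \<alpha> by (rule band_rep)
    obtain U g where G_eq: "G \<alpha> = (U, g)"
      by fastforce
    have "S_elem (X \<alpha>) (U, g)" "S_le (S_abs (U, g)) (S_abs (T \<alpha> (y x \<alpha>)))"
      using G le \<alpha> unfolding Sp_elem_def Sp_le_def Sp_abs_def by (auto simp: G_eq[symmetric])
    then obtain w\<^sub>1 w\<^sub>2 where "w\<^sub>1 \<in> B \<alpha>" "0 \<le> w\<^sub>1" "w\<^sub>1 \<le> vl_abs (y x \<alpha>)"
        "w\<^sub>2 \<in> B \<alpha>" "0 \<le> w\<^sub>2" "w\<^sub>2 \<le> vl_abs (y x \<alpha>)" "S_eq (T \<alpha> (w\<^sub>1 - w\<^sub>2)) (U, g)"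
      using exists_preimage_abs_le[OF comp_in[OF \<alpha>]] by metis
    with abs_component_le[OF \<alpha>, of x] show ?thesis
      unfolding G_eq by (meson order_trans)
  qed
  then obtain w\<^sub>1 w\<^sub>2 where w: "\<And>\<alpha>. \<alpha> \<in> I \<Longrightarrow> w\<^sub>1 \<alpha> \<in> B \<alpha> \<and> 0 \<le> w\<^sub>1 \<alpha> \<and> w\<^sub>1 \<alpha> \<le> vl_abs x
      \<and> w\<^sub>2 \<alpha> \<in> B \<alpha> \<and> 0 \<le> w\<^sub>2 \<alpha> \<and> w\<^sub>2 \<alpha> \<le> vl_abs x \<and> S_eq (T \<alpha> (w\<^sub>1 \<alpha> - w\<^sub>2 \<alpha>)) (G \<alpha>)"
    by metis
  obtain s\<^sub>1 s\<^sub>2 where "\<forall>\<alpha>\<in>I. y s\<^sub>1 \<alpha> = w\<^sub>1 \<alpha>" "\<forall>\<alpha>\<in>I. y s\<^sub>2 \<alpha> = w\<^sub>2 \<alpha>"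
    using exists_with_components[of w\<^sub>1 "vl_abs x"] exists_with_components[of w\<^sub>2 "vl_abs x"] w by meson
  then have "Sp_eq I (rep (s\<^sub>1 - s\<^sub>2)) G"
    using w unfolding Sp_eq_def by (simp add: component_diff)
  then show ?thesis ..
qed

end

theorem corollary3p5:
  fixes I :: "'i set"
    and B :: "'i \<Rightarrow> 'e::{ordered_real_vector,lattice} set"
    and u :: "'i \<Rightarrow> 'e"
    and y :: "'e \<Rightarrow> 'i \<Rightarrow> 'e"
    and X :: "'i \<Rightarrow> 'x topology"
    and T\<^sub>\<alpha> :: "'i \<Rightarrow> 'e \<Rightarrow> 'x sfun"
  assumes complete: "order_complete TYPE('e)"
    and bands: "\<And>\<alpha>. \<alpha> \<in> I \<Longrightarrow> vl_band (B \<alpha>)"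
    and disj: "\<And>\<alpha> \<beta> a b. \<alpha> \<in> I \<Longrightarrow> \<beta> \<in> I \<Longrightarrow> \<alpha> \<noteq> \<beta> \<Longrightarrow> a \<in> B \<alpha> \<Longrightarrow> b \<in> B \<beta> \<Longrightarrow> vl_disjoint a b"
    and units: "\<And>\<alpha>. \<alpha> \<in> I \<Longrightarrow> weak_unit (B \<alpha>) (u \<alpha>)"
    and comp_in: "\<And>x \<alpha>. \<alpha> \<in> I \<Longrightarrow> y x \<alpha> \<in> B \<alpha>"
    and comp_rest: "\<And>x \<alpha> b. \<alpha> \<in> I \<Longrightarrow> b \<in> B \<alpha> \<Longrightarrow> vl_disjoint (x - y x \<alpha>) b"
    and decomp: "\<And>x. 0 \<le> x \<Longrightarrow> is_sup (y x ` I) x"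
    and cpt: "\<And>\<alpha>. \<alpha> \<in> I \<Longrightarrow> compact_space (X \<alpha>)"
    and hd: "\<And>\<alpha>. \<alpha> \<in> I \<Longrightarrow> Hausdorff_space (X \<alpha>)"
    and hom: "\<And>\<alpha>. \<alpha> \<in> I \<Longrightarrow> S_inj_lattice_hom (X \<alpha>) (B \<alpha>) (T\<^sub>\<alpha> \<alpha>)"
    and one: "\<And>\<alpha>. \<alpha> \<in> I \<Longrightarrow> S_eq (T\<^sub>\<alpha> \<alpha> (u \<alpha>)) (S_one (X \<alpha>))"
    and dense: "\<And>\<alpha>. \<alpha> \<in> I \<Longrightarrow> sup_closure_is_C (X \<alpha>) (T\<^sub>\<alpha> \<alpha>) (generated_ideal (B \<alpha>) (u \<alpha>))"
  shows "Sp_ideal X I (range (\<lambda>x. \<lambda>\<alpha>. T\<^sub>\<alpha> \<alpha> (y x \<alpha>)))"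
proof -
  interpret wickstead_rep I B u y X "T\<^sub>\<alpha>"
    by unfold_locales (fact assms)+
  show ?thesis
    unfolding Sp_ideal_def using Sp_elem_rep Sp_eq_rep_add Sp_eq_rep_scaleR rep_solid by blast
qed

end
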